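(* Let $\alpha_1,\dots,\alpha_n\in\mathbb R$, $f(t)=\prod_{j=1}^n(t-\alpha_j)$, $N\ge1$, and for $i=1,\dots,N$ let $A_i\neq0$ and $b_i,c_i\in\mathbb R\setminus\{\alpha_1,\dots,\alpha_n\}$ with $f(b_i)=f(c_i)$, such that all $b_i,c_j$ ($i\neq j$) satisfy $b_i\neq c_j$, $b_i\neq b_j$, $c_i\neq c_j$. Put $B_{i,j}=\frac{b_i-\alpha_j}{c_i-\alpha_j}$, $Z_{i,j}=\frac{(b_i-b_j)(c_i-c_j)}{(b_i-c_j)(c_i-b_j)}$ for $i\neq j$, $f_i(\mathbf s)=A_i\prod_{j=1}^nB_{i,j}^{\mathbf s_j}$ for $\mathbf s\in\mathbb Z^n$, and $$\tau(\mathbf s)=\sum_{T\subseteq[N]}\ \prod_{\{i<j\}\subseteq T}Z_{i,j}\ \prod_{i\in T}f_i(\mathbf s).$$ Fix $k\in[N]$. Let $\tau^{(b_k\leftrightarrow c_k)}$ denote the function obtained by the same formula after interchanging the values of $b_k$ and $c_k$, and let $\tau^{\mathrm{adj}}$ denote the function obtained by the same formula after replacing $A_j$ by $A_j/Z_{k,j}$ for every $j\neq k$ and $A_k$ by $1/A_k$ (keeping all $b_i,c_i$). Then for all $\mathbf s\in\mathbb Z^n$, $$\tau^{(b_k\leftrightarrow c_k)}(\mathbf s)=\frac{A_k}{\prod_{j=1}^nB_{k,j}^{\mathbf s_j}}\ \tau^{\mathrm{adj}}(\mathbf s).$$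
   Context: $[N]=\{1,\dots,N\}$. Note $Z_{i,j}=Z_{j,i}$. *)

theory Defs
  imports Complex_Main
begin

text \<open>Indices: alpha on {1..n}; A, b, c on {1..N}; s :: nat => int on {1..n}.\<close>

definition polyf :: "nat \<Rightarrow> (nat \<Rightarrow> real) \<Rightarrow> real \<Rightarrow> real" where
  "polyf n alpha t = (\<Prod>j=1..n. t - alpha j)"

definition Bcoef :: "(nat \<Rightarrow> real) \<Rightarrow> (nat \<Rightarrow> real) \<Rightarrow> (nat \<Rightarrow> real) \<Rightarrow> nat \<Rightarrow> nat \<Rightarrow> real" where
  "Bcoef alpha b c i j = (b i - alpha j) / (c i - alpha j)"

definition Zcoef :: "(nat \<Rightarrow> real) \<Rightarrow> (nat \<Rightarrow> real) \<Rightarrow> nat \<Rightarrow> nat \<Rightarrow> real" where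
  "Zcoef b c i j = ((b i - b j) * (c i - c j)) / ((b i - c j) * (c i - b j))"

definition fcoef :: "nat \<Rightarrow> (nat \<Rightarrow> real) \<Rightarrow> (nat \<Rightarrow> real) \<Rightarrow> (nat \<Rightarrow> real) \<Rightarrow> (nat \<Rightarrow> real)
    \<Rightarrow> nat \<Rightarrow> (nat \<Rightarrow> int) \<Rightarrow> real" where
  "fcoef n alpha A b c i s = A i * (\<Prod>j=1..n. Bcoef alpha b c i j powi s j)"

definition tau :: "nat \<Rightarrow> nat \<Rightarrow> (nat \<Rightarrow> real) \<Rightarrow> (nat \<Rightarrow> real) \<Rightarrow> (nat \<Rightarrow> real) \<Rightarrow> (nat \<Rightarrow> real)
    \<Rightarrow> (nat \<Rightarrow> int) \<Rightarrow> real" where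
  "tau n N alpha A b c s =
     (\<Sum>T\<in>Pow {1..N}.
        (\<Prod>p\<in>{(i, j). i \<in> T \<and> j \<in> T \<and> i < j}. Zcoef b c (fst p) (snd p))
        * (\<Prod>i\<in>T. fcoef n alpha A b c i s))"

end

theory Submission imports Defs begin

text \<open>Splitting the sum over \<open>T \<subseteq> [N]\<close> according to whether \<open>k \<in> T\<close> writes both sides as
  \<open>\<Sigma>\<^sub>0 + x \<cdot> \<Sigma>\<^sub>1\<close>, where \<open>\<Sigma>\<^sub>0\<close> and \<open>\<Sigma>\<^sub>1\<close> are sums over subsets of \<open>[N] - {k}\<close> whose weights
  differ by the factors \<open>Z\<^sub>k\<^sub>,\<^sub>i\<close>. Interchanging \<open>b\<^sub>k\<close> and \<open>c\<^sub>k\<close> inverts every \<open>Z\<^sub>k\<^sub>,\<^sub>i\<close> and every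
  \<open>B\<^sub>k\<^sub>,\<^sub>j\<close> and leaves all other data unchanged, while the adjusted coefficients divide the
  weight of each \<open>i \<noteq> k\<close> by \<open>Z\<^sub>k\<^sub>,\<^sub>i\<close>; hence the two decompositions contain the same two sums
  with their roles exchanged.\<close>

definition pair_prod :: "('a::linorder \<Rightarrow> 'a \<Rightarrow> 'b::comm_monoid_mult) \<Rightarrow> 'a set \<Rightarrow> 'b" where
  "pair_prod g T = (\<Prod>p\<in>{(i, j). i \<in> T \<and> j \<in> T \<and> i < j}. g (fst p) (snd p))"

definition subset_sum :: "('a::linorder \<Rightarrow> 'a \<Rightarrow> 'b::comm_ring_1) \<Rightarrow> ('a \<Rightarrow> 'b) \<Rightarrow> 'a set \<Rightarrow> 'b" where
  "subset_sum g w S = (\<Sum>T\<in>Pow S. pair_prod g T * prod w T)"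

lemma sum_Pow_insert:
  assumes "finite S" "k \<notin> S"
  shows "(\<Sum>T\<in>Pow (insert k S). F T) = (\<Sum>T\<in>Pow S. F T) + (\<Sum>T\<in>Pow S. F (insert k T))"
proof -
  have inj: "inj_on (insert k) (Pow S)"
    using assms(2) unfolding inj_on_def by (metis Pow_iff insert_ident subsetD)
  have "(\<Sum>T\<in>Pow (insert k S). F T) = (\<Sum>T\<in>Pow S. F T) + (\<Sum>T\<in>insert k ` Pow S. F T)"
    unfolding Pow_insert using assms by (intro sum.union_disjoint) auto
  also have "(\<Sum>T\<in>insert k ` Pow S. F T) = (\<Sum>T\<in>Pow S. F (insert k T))"
    using sum.reindex[OF inj] by simp
  finally show ?thesis .
qed

lemma pair_prod_insert:
  assumes "finite S" "k \<notin> S" and sym: "\<And>i j. g i j = g j i"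
  shows "pair_prod g (insert k S) = pair_prod g S * (\<Prod>j\<in>S. g k j)"
proof -
  define pair where "pair j = (min k j, max k j)" for j
  have pairs: "{(i, j). i \<in> insert k S \<and> j \<in> insert k S \<and> i < j}
      = {(i, j). i \<in> S \<and> j \<in> S \<and> i < j} \<union> pair ` S" (is "?L = ?R \<union> _")
  proof (intro set_eqI iffI)
    fix p assume "p \<in> ?L"
    then obtain i j where p: "p = (i, j)" "i \<in> insert k S" "j \<in> insert k S" "i < j" by blast
    have "j \<in> S \<and> p = pair j" if "i = k"
      using p that unfolding pair_def by auto
    moreover have "i \<in> S \<and> p = pair i" if "j = k"
      using p that unfolding pair_def by auto
    ultimately show "p \<in> ?R \<union> pair ` S"
      using p by blast
  next
    fix p assume "p \<in> ?R \<union> pair ` S"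
    moreover have "min k j < max k j" if "j \<in> S" for j
      using that assms(2) by (cases "k < j") (auto simp: min_def max_def)
    ultimately show "p \<in> ?L" unfolding pair_def by (auto simp: min_def max_def)
  qed
  have "finite ?R"
    by (rule finite_subset[of _ "S \<times> S"]) (use assms(1) in auto)
  moreover have "?R \<inter> pair ` S = {}"
    using assms(2) unfolding pair_def by (auto simp: min_def max_def split: if_splits)
  moreover have "inj_on pair S"
    unfolding pair_def inj_on_def by (auto simp: min_def max_def split: if_splits)
  moreover have "g (fst (pair j)) (snd (pair j)) = g k j" for j
    unfolding pair_def by (cases "k \<le> j") (auto simp: sym)
  ultimately show ?thesis
    unfolding pair_prod_def pairs using assms(1)
    by (simp add: prod.union_disjoint prod.reindex)
qed

lemma subset_sum_insert:
  assumes "finite S" "k \<notin> S" and sym: "\<And>i j. g i j = g j i"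
  shows "subset_sum g w (insert k S) = subset_sum g w S + w k * subset_sum g (\<lambda>i. g k i * w i) S"
proof -
  have "pair_prod g (insert k T) * prod w (insert k T)
      = w k * (pair_prod g T * (\<Prod>i\<in>T. g k i * w i))" if "T \<subseteq> S" for T
  proof -
    have "finite T" "k \<notin> T" using that assms(1,2) finite_subset by auto
    then show ?thesis
      by (simp add: pair_prod_insert sym prod.distrib)
  qed
  then show ?thesis
    unfolding subset_sum_def sum_Pow_insert[OF assms(1,2)] sum_distrib_left by simp
qed

lemma subset_sum_cong:
  assumes "\<And>i j. i \<in> S \<Longrightarrow> j \<in> S \<Longrightarrow> g i j = g' i j" and "\<And>i. i \<in> S \<Longrightarrow> w i = w' i"
  shows "subset_sum g w S = subset_sum g' w' S"
proof -
  have "pair_prod g T = pair_prod g' T" "prod w T = prod w' T" if "T \<subseteq> S" for T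
    unfolding pair_prod_def using that by (auto intro!: prod.cong assms)
  then show ?thesis
    unfolding subset_sum_def by (intro sum.cong) auto
qed

lemma tau_eq_subset_sum:
  "tau n N alpha A b c s = subset_sum (Zcoef b c) (\<lambda>i. fcoef n alpha A b c i s) {1..N}"
  unfolding tau_def subset_sum_def pair_prod_def ..

lemma Zcoef_sym: "Zcoef b c i j = Zcoef b c j i"
  unfolding Zcoef_def by (simp add: algebra_simps)

lemma Zcoef_nonzero:
  assumes "b i \<noteq> b j" "c i \<noteq> c j" "b i \<noteq> c j" "c i \<noteq> b j"
  shows "Zcoef b c i j \<noteq> 0"
  using assms unfolding Zcoef_def by simp

lemma Zcoef_swap_other:
  "i \<noteq> k \<Longrightarrow> j \<noteq> k \<Longrightarrow> Zcoef (b(k := c k)) (c(k := b k)) i j = Zcoef b c i j"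
  unfolding Zcoef_def by simp

lemma Zcoef_swap: "i \<noteq> k \<Longrightarrow> Zcoef (b(k := c k)) (c(k := b k)) k i = inverse (Zcoef b c k i)"
  unfolding Zcoef_def by (simp add: algebra_simps)

lemma fcoef_swap_other:
  "i \<noteq> k \<Longrightarrow> fcoef n alpha A (b(k := c k)) (c(k := b k)) i s = fcoef n alpha A b c i s"
  unfolding fcoef_def Bcoef_def by simp

lemma fcoef_swap:
  "fcoef n alpha A (b(k := c k)) (c(k := b k)) k s = A k / (\<Prod>j=1..n. Bcoef alpha b c k j powi s j)"
proof -
  have "(\<Prod>j=1..n. Bcoef alpha (b(k := c k)) (c(k := b k)) k j powi s j)
      = (\<Prod>j=1..n. inverse (Bcoef alpha b c k j powi s j))"
    by (simp add: Bcoef_def power_int_inverse[symmetric])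
  also have "\<dots> = inverse (\<Prod>j=1..n. Bcoef alpha b c k j powi s j)"
    by (rule prod_inversef[unfolded comp_def])
  finally show ?thesis
    unfolding fcoef_def divide_inverse by (rule arg_cong)
qed

theorem proposition8p8:
  fixes n N k :: nat and alpha A b c :: "nat \<Rightarrow> real" and s :: "nat \<Rightarrow> int"
  assumes "N \<ge> 1"
    and "\<And>i. i \<in> {1..N} \<Longrightarrow> A i \<noteq> 0"
    and "\<And>i. i \<in> {1..N} \<Longrightarrow> b i \<notin> alpha ` {1..n}"
    and "\<And>i. i \<in> {1..N} \<Longrightarrow> c i \<notin> alpha ` {1..n}"
    and "\<And>i. i \<in> {1..N} \<Longrightarrow> polyf n alpha (b i) = polyf n alpha (c i)"
    and "\<And>i j. i \<in> {1..N} \<Longrightarrow> j \<in> {1..N} \<Longrightarrow> i \<noteq> j \<Longrightarrow>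
            b i \<noteq> c j \<and> b i \<noteq> b j \<and> c i \<noteq> c j"
    and "k \<in> {1..N}"
  shows "tau n N alpha A (b(k := c k)) (c(k := b k)) s =
         A k / (\<Prod>j=1..n. Bcoef alpha b c k j powi s j)
         * tau n N alpha (\<lambda>j. if j = k then 1 / A k else A j / Zcoef b c k j) b c s"
proof -
  define J where "J = {1..N} - {k}"
  define P where "P = (\<Prod>j=1..n. Bcoef alpha b c k j powi s j)"
  define A' where "A' j = (if j = k then 1 / A k else A j / Zcoef b c k j)" for j
  define g where "g = Zcoef b c"
  define f where "f i = fcoef n alpha A b c i s" for i
  have split: "{1..N} = insert k J" "finite J" "k \<notin> J"
    using assms(7) unfolding J_def by auto
  have "A k \<noteq> 0" using assms(2,7) by simp
  have "P \<noteq> 0"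
    using assms(3,4)[OF assms(7)] unfolding P_def Bcoef_def by (force intro: power_int_not_zero)
  have g_nonzero: "g k i \<noteq> 0" if "i \<in> J" for i
    using that assms(6)[of k i] assms(6)[of i k] assms(7) unfolding J_def g_def
    by (intro Zcoef_nonzero) auto
  have swapped: "tau n N alpha A (b(k := c k)) (c(k := b k)) s
      = subset_sum g f J + A k / P * subset_sum g (\<lambda>i. f i / g k i) J"
    unfolding tau_eq_subset_sum split(1) subset_sum_insert[OF split(2,3) Zcoef_sym]
    by (intro arg_cong2[where f = "(+)"] arg_cong2[where f = "(*)"] subset_sum_cong)
      (auto simp: J_def fcoef_swap fcoef_swap_other Zcoef_swap Zcoef_swap_other f_def g_def P_def
        divide_inverse)
  have adjusted: "tau n N alpha A' b c s
      = subset_sum g (\<lambda>i. f i / g k i) J + P / A k * subset_sum g f J"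
    unfolding tau_eq_subset_sum split(1) subset_sum_insert[OF split(2,3) Zcoef_sym]
    using g_nonzero
    by (intro arg_cong2[where f = "(+)"] arg_cong2[where f = "(*)"] subset_sum_cong)
      (auto simp: J_def fcoef_def A'_def f_def g_def P_def)
  show ?thesis
    unfolding swapped A'_def[symmetric] adjusted P_def[symmetric]
    using \<open>A k \<noteq> 0\<close> \<open>P \<noteq> 0\<close> by (simp add: field_simps)
qed

end
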